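(* Let $\beta\in(0,2)$. Then for all $x\in\mathbb{R}^d$, $$|x|^\beta=2^{d+\beta}\pi^{d/2}\frac{\Gamma(\frac{d+\beta}{2})}{\Gamma(\frac{d+\beta}{\alpha})\,|\Gamma(\frac{-\beta}{2})|}\int_0^\infty[p(t,0)-p(t,x)]\,t^{\frac{d-\alpha+\beta}{\alpha}}\,dt,$$ where $\Gamma(-\beta/2)=\int_0^\infty t^{-1-\beta/2}(e^{-t}-1)\,dt$.
   Context: Let $d\ge1$ be an integer and $\alpha\in(0,d\wedge2)$. $p(t,x)$, $t>0$, $x\in\mathbb{R}^d$, denotes the transition density (from $0$) of the rotationally symmetric $\alpha$-stable Lévy process on $\mathbb{R}^d$, i.e. $\int e^{i\xi\cdot x}p(t,x)\,dx=e^{-t|\xi|^\alpha}$ (the heat kernel of $\Delta^{\alpha/2}=-(-\Delta)^{\alpha/2}$). *)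

theory Defs
  imports "HOL-Analysis.Analysis"
begin

text \<open>Heat kernel of the fractional Laplacian (rotationally symmetric alpha-stable
  transition density from 0) on a Euclidean space 'n of dimension d = DIM('n),
  given by Fourier inversion of exp(-t |xi|^alpha):
  p(t,x) = (2 pi)^(-d) * integral of exp(-i xi.x) exp(-t |xi|^alpha) d xi.\<close>
definition stable_density :: "real \<Rightarrow> real \<Rightarrow> 'n::euclidean_space \<Rightarrow> real" where
  "stable_density \<alpha> t x =
     (2 * pi) powr (- real DIM('n)) *
     Re (LINT \<xi>|lborel. exp (- \<i> * complex_of_real (\<xi> \<bullet> x))
                         * complex_of_real (exp (- t * norm \<xi> powr \<alpha>)))"

end

theory Submission
  imports Defs "HOL-Probability.Characteristic_Functions"
begin

text \<open>
  By Fourier inversion, \<open>p(t,0) - p(t,x) = (2\<pi>)^-d \<integral> (1 - cos (\<xi>\<cdot>x)) exp (-t |\<xi>|^\<alpha>) d\<xi> \<ge> 0\<close>.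
  Integrating against \<open>t^(s-1)\<close>, \<open>s = (d + \<beta>)/\<alpha>\<close>, and exchanging the nonnegative integrals,
  the \<open>t\<close>-integral becomes \<open>\<Gamma>(s) |\<xi>|^-(d+\<beta>)\<close>; this leaves the classical integral
  \<open>\<integral> (1 - cos (\<xi>\<cdot>x)) |\<xi>|^-(d+\<beta>) d\<xi>\<close>. Writing \<open>|\<xi>|^-(d+\<beta>)\<close> as the Gaussian mixture
  \<open>\<Gamma>(h)^-1 \<integral>\<^sub>0\<^sup>\<infinity> u^(h-1) exp (-u |\<xi>|\<^sup>2) du\<close>, \<open>h = (d + \<beta>)/2\<close>, and exchanging again, the
  Gaussian Fourier transform turns it into
  \<open>\<pi>^(d/2) \<Gamma>(h)^-1 \<integral>\<^sub>0\<^sup>\<infinity> u^(\<beta>/2-1) (1 - exp (-|x|\<^sup>2/(4u))) du = \<pi>^(d/2) \<Gamma>(h)^-1 |\<Gamma>(-\<beta>/2)| (|x|/2)^\<beta>\<close>.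
  Since every integral is evaluated as a nonnegative integral, integrability comes for free.
\<close>

lemma nn_integral_indicator_incseq_SUP:
  fixes f :: "'a \<Rightarrow> ennreal"
  assumes [measurable]: "f \<in> borel_measurable M" "\<And>n. A n \<in> sets M" and "incseq A"
  shows "(SUP n. \<integral>\<^sup>+ x. f x * indicator (A n) x \<partial>M) = (\<integral>\<^sup>+ x. f x * indicator (\<Union>n. A n) x \<partial>M)"
  using SUP_emeasure_incseq[of A "density M f"] assms by (simp add: emeasure_density image_subset_iff)

lemma nn_integral_ennreal_cmult_indicator:
  fixes f :: "'a \<Rightarrow> real"
  assumes "0 \<le> c" and [measurable]: "f \<in> borel_measurable M" "A \<in> sets M"
  shows "(\<integral>\<^sup>+ x. ennreal (c * f x) * indicator A x \<partial>M) = ennreal c * (\<integral>\<^sup>+ x. ennreal (f x) * indicator A x \<partial>M)"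
  using assms by (subst nn_integral_cmult[symmetric]) (auto simp: ennreal_mult' mult.assoc)

lemma
  fixes f :: "'a \<Rightarrow> real"
  assumes [measurable]: "f \<in> borel_measurable M" "A \<in> sets M"
    and nonneg: "\<And>x. x \<in> A \<Longrightarrow> 0 \<le> f x" and "0 \<le> V"
    and nn: "(\<integral>\<^sup>+ x. ennreal (f x) * indicator A x \<partial>M) = ennreal V"
  shows set_integrable_nn_integral_eq: "set_integrable M A f"
    and set_integral_nn_integral_eq: "(LINT x:A|M. f x) = V"
proof -
  have hb: "has_bochner_integral M (\<lambda>x. indicator A x *\<^sub>R f x) V"
    using nonneg \<open>0 \<le> V\<close> nn
    by (intro has_bochner_integral_nn_integral) (auto simp: nn_integral_set_ennreal mult.commute split: split_indicator)
  then show "set_integrable M A f"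
    unfolding set_integrable_def by (rule integrable.intros)
  from hb show "(LINT x:A|M. f x) = V"
    unfolding set_lebesgue_integral_def by (rule has_bochner_integral_integral_eq)
qed

section \<open>Integrals on the half-line\<close>

lemma nn_integral_pos_exp_subst:
  fixes F :: "real \<Rightarrow> ennreal"
  assumes [measurable]: "F \<in> borel_measurable borel"
  shows "(\<integral>\<^sup>+ u. F u * indicator {0<..} u \<partial>lborel) = (\<integral>\<^sup>+ s. F (exp s) * ennreal (exp s) \<partial>lborel)"
proof -
  define r :: "nat \<Rightarrow> real" where "r n = real (Suc n)" for n
  have "(\<Union>n. {exp (- r n)..exp (r n)}) = {0<..}"
  proof (intro equalityI subsetI)
    fix u :: real assume u: "u \<in> {0<..}"
    obtain n :: nat where n: "\<bar>ln u\<bar> \<le> real n"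
      using real_arch_simple by blast
    have "- r n \<le> ln u" "ln u \<le> r n" using n by (auto simp: r_def)
    then have "exp (- r n) \<le> u \<and> u \<le> exp (r n)"
      using u by (metis exp_le_cancel_iff exp_ln greaterThan_iff)
    then show "u \<in> (\<Union>n. {exp (- r n)..exp (r n)})" by auto
  qed (auto intro: less_le_trans[OF exp_gt_zero])
  moreover have "(\<Union>n. {- r n..r n}) = UNIV"
  proof (intro equalityI subsetI)
    fix s :: real
    obtain n :: nat where "\<bar>s\<bar> \<le> real n"
      using real_arch_simple by blast
    then have "\<bar>s\<bar> \<le> r n" by (simp add: r_def)
    then show "s \<in> (\<Union>n. {- r n..r n})" by (auto simp: abs_le_iff intro!: exI[of _ n])
  qed auto
  moreover have "incseq (\<lambda>n. {exp (- r n)..exp (r n)})" "incseq (\<lambda>n. {- r n..r n})"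
    by (auto simp: incseq_def r_def)
  moreover have "(\<integral>\<^sup>+ u. F u * indicator {exp (- r n)..exp (r n)} u \<partial>lborel)
      = (\<integral>\<^sup>+ s. F (exp s) * ennreal (exp s) * indicator {- r n..r n} s \<partial>lborel)" for n
    by (intro nn_integral_substitution_aux) (auto intro!: derivative_eq_intros continuous_on_exp continuous_on_id simp: r_def)
  ultimately show ?thesis
    using nn_integral_indicator_incseq_SUP[of F lborel "\<lambda>n. {exp (- r n)..exp (r n)}"]
      nn_integral_indicator_incseq_SUP[of "\<lambda>s. F (exp s) * ennreal (exp s)" lborel "\<lambda>n. {- r n..r n}"]
    by simp
qed

lemma nn_integral_pos_inverse_subst:
  fixes F :: "real \<Rightarrow> ennreal"
  assumes [measurable]: "F \<in> borel_measurable borel"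
  shows "(\<integral>\<^sup>+ u. F u * indicator {0<..} u \<partial>lborel)
       = (\<integral>\<^sup>+ v. F (1 / v) * ennreal (1 / v\<^sup>2) * indicator {0<..} v \<partial>lborel)"
proof -
  have "(\<integral>\<^sup>+ u. F u * indicator {0<..} u \<partial>lborel) = (\<integral>\<^sup>+ s. F (exp s) * ennreal (exp s) \<partial>lborel)"
    by (rule nn_integral_pos_exp_subst) simp
  also have "\<dots> = (\<integral>\<^sup>+ s. F (exp (- s)) * ennreal (exp (- s)) \<partial>lborel)"
    using nn_integral_real_affine[of "\<lambda>s. F (exp s) * ennreal (exp s)" "-1" 0] by simp
  also have "\<dots> = (\<integral>\<^sup>+ s. F (1 / exp s) * ennreal (1 / (exp s)\<^sup>2) * ennreal (exp s) \<partial>lborel)"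
    by (intro nn_integral_cong)
       (simp add: exp_minus inverse_eq_divide power2_eq_square mult.assoc flip: ennreal_mult)
  also have "\<dots> = (\<integral>\<^sup>+ v. F (1 / v) * ennreal (1 / v\<^sup>2) * indicator {0<..} v \<partial>lborel)"
    by (rule nn_integral_pos_exp_subst[symmetric]) simp
  finally show ?thesis .
qed

lemma nn_integral_pos_powr_subst:
  fixes F :: "real \<Rightarrow> ennreal"
  assumes [measurable]: "F \<in> borel_measurable borel" and p: "0 < p"
  shows "(\<integral>\<^sup>+ y. F y * indicator {0<..} y \<partial>lborel)
       = (\<integral>\<^sup>+ u. F (u powr p) * ennreal (p * u powr (p - 1)) * indicator {0<..} u \<partial>lborel)"
proof -
  have "(\<integral>\<^sup>+ y. F y * indicator {0<..} y \<partial>lborel) = (\<integral>\<^sup>+ s. F (exp s) * ennreal (exp s) \<partial>lborel)"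
    by (rule nn_integral_pos_exp_subst) simp
  also have "\<dots> = ennreal p * (\<integral>\<^sup>+ s. F (exp (p * s)) * ennreal (exp (p * s)) \<partial>lborel)"
    using nn_integral_real_affine[of "\<lambda>s. F (exp s) * ennreal (exp s)" p 0] p by simp
  also have "\<dots> = (\<integral>\<^sup>+ s. F (exp s powr p) * ennreal (p * exp s powr (p - 1)) * ennreal (exp s) \<partial>lborel)"
  proof (subst nn_integral_cmult[symmetric], simp, intro nn_integral_cong)
    fix s :: real
    have e1: "exp s powr p = exp (p * s)" by (simp add: powr_def)
    have e2: "ennreal (p * exp s powr (p - 1)) * ennreal (exp s) = ennreal p * ennreal (exp (p * s))"
      using p by (simp add: powr_def algebra_simps flip: ennreal_mult exp_add)
    show "ennreal p * (F (exp (p * s)) * ennreal (exp (p * s)))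
        = F (exp s powr p) * ennreal (p * exp s powr (p - 1)) * ennreal (exp s)"
      unfolding e1 mult.assoc e2 by (simp add: mult_ac)
  qed
  also have "\<dots> = (\<integral>\<^sup>+ u. F (u powr p) * ennreal (p * u powr (p - 1)) * indicator {0<..} u \<partial>lborel)"
    by (rule nn_integral_pos_exp_subst[symmetric]) simp
  finally show ?thesis .
qed

text \<open>The exponent is written in the simplifier's normal form \<open>- (t * r)\<close>, so that the lemma
  still applies to simplified goals.\<close>

lemma nn_integral_Gamma_laplace:
  fixes r s :: real
  assumes r: "0 < r" and s: "0 < s"
  shows "(\<integral>\<^sup>+ t. ennreal (t powr (s - 1) * exp (- (t * r))) * indicator {0<..} t \<partial>lborel)
       = ennreal (Gamma s * r powr (- s))" (is "?I = _")
proof -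
  have "ennreal (Gamma s) = (\<integral>\<^sup>+ t. ennreal (indicator {0..} t * t powr (s - 1) / exp t) \<partial>lborel)"
    using Gamma_conv_nn_integral_real[OF s] by simp
  also have "\<dots> = ennreal r * (\<integral>\<^sup>+ t. ennreal (indicator {0..} (r * t) * (r * t) powr (s - 1) / exp (r * t)) \<partial>lborel)"
    using nn_integral_real_affine[of "\<lambda>t. ennreal (indicator {0..} t * t powr (s - 1) / exp t)" r 0] r
    by simp
  also have "\<dots> = ennreal r * (\<integral>\<^sup>+ t. ennreal (r powr (s - 1)) *
      (ennreal (t powr (s - 1) * exp (- (t * r))) * indicator {0<..} t) \<partial>lborel)"
    using r by (intro arg_cong2[where f = "(*)"] refl nn_integral_cong_AE AE_I[of _ _ "{0}"])
      (auto simp: indicator_def powr_mult exp_minus field_simps zero_le_mult_iff simp flip: ennreal_mult)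
  also have "\<dots> = ennreal r * ennreal (r powr (s - 1)) *
      (\<integral>\<^sup>+ t. ennreal (t powr (s - 1) * exp (- (t * r))) * indicator {0<..} t \<partial>lborel)"
    by (subst nn_integral_cmult) (auto simp: mult.assoc)
  also have "ennreal r * ennreal (r powr (s - 1)) = ennreal (r powr s)"
    using r by (simp add: powr_diff flip: ennreal_mult)
  finally have G: "ennreal (Gamma s) = ennreal (r powr s) * ?I" .
  have "?I = ennreal (r powr (- s) * r powr s) * ?I"
    using r by (simp flip: powr_add)
  also have "\<dots> = ennreal (Gamma s * r powr (- s))"
    using r s by (simp add: G ennreal_mult' mult_ac)
  finally show ?thesis .
qed

lemma nn_integral_laplace_norm_powr:
  fixes \<xi> :: "'a::real_normed_vector"
  assumes "\<xi> \<noteq> 0" and "0 < \<alpha>" and "0 < s"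
  shows "(\<integral>\<^sup>+ t. ennreal (t powr (s - 1) * exp (- (t * norm \<xi> powr \<alpha>))) * indicator {0<..} t \<partial>lborel)
       = ennreal (Gamma s * norm \<xi> powr (- (\<alpha> * s)))"
  using nn_integral_Gamma_laplace[of "norm \<xi> powr \<alpha>" s] assms by (simp add: powr_powr)

lemma nn_integral_powr_tail:
  fixes r \<gamma> :: real assumes r: "0 < r" and \<gamma>: "0 < \<gamma>"
  shows "(\<integral>\<^sup>+ w. ennreal (w powr (- 1 - \<gamma>)) * indicator {r..} w \<partial>lborel) = ennreal (r powr (- \<gamma>) / \<gamma>)"
proof -
  have "((\<lambda>w. - (w powr (- \<gamma>)) / \<gamma>) \<longlongrightarrow> - 0 / \<gamma>) at_top"
    using \<gamma> by (intro tendsto_intros tendsto_neg_powr filterlim_ident) auto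
  then have "(\<integral>\<^sup>+ w. ennreal (w powr (- 1 - \<gamma>)) * indicator {r..} w \<partial>lborel) = ennreal (0 - (- (r powr (- \<gamma>)) / \<gamma>))"
    using r \<gamma> by (intro nn_integral_FTC_atLeast)
      (auto intro!: derivative_eq_intros simp: field_simps powr_diff powr_minus)
  then show ?thesis by simp
qed

lemma Gamma_one_minus:
  fixes \<gamma> :: real assumes "0 < \<gamma>" and "\<gamma> < 1"
  shows "Gamma (1 - \<gamma>) = - \<gamma> * Gamma (- \<gamma>)"
proof -
  have "- \<gamma> \<notin> \<int>\<^sub>\<le>\<^sub>0"
  proof
    assume "- \<gamma> \<in> \<int>\<^sub>\<le>\<^sub>0"
    then obtain n :: int where "- \<gamma> = of_int n" by (auto elim!: nonpos_Ints_cases)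
    with assms have "n < 0" "- 1 < n" by linarith+
    then show False by simp
  qed
  from Gamma_plus1[OF this] show ?thesis by simp
qed

lemma Gamma_neg_less_zero:
  fixes \<gamma> :: real assumes "0 < \<gamma>" and "\<gamma> < 1"
  shows "Gamma (- \<gamma>) < 0"
  using Gamma_one_minus[OF assms] Gamma_real_pos[of "1 - \<gamma>"] assms
  by (simp add: mult_less_0_iff)

lemma nn_integral_powr_one_minus_exp:
  fixes \<gamma> c :: real assumes \<gamma>: "0 < \<gamma>" "\<gamma> < 1" and c: "0 < c"
  shows "(\<integral>\<^sup>+ v. ennreal (v powr (- 1 - \<gamma>) * (1 - exp (- c * v))) * indicator {0<..} v \<partial>lborel)
       = ennreal (- Gamma (- \<gamma>) * c powr \<gamma>)"
proof -
  \<comment> \<open>\<open>1 - exp (- c * v)\<close> is the integral of \<open>c * exp (- c * r)\<close> over \<open>[0, v]\<close>; swapping the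
    integrals leaves a power tail in \<open>v\<close> and then a Gamma integral in \<open>r\<close>.\<close>
  define H where "H v r = ennreal (if 0 < v \<and> 0 \<le> r \<and> r \<le> v then v powr (- 1 - \<gamma>) * (c * exp (- c * r)) else 0)"
    for v r :: real
  have [measurable]: "case_prod H \<in> borel_measurable (lborel \<Otimes>\<^sub>M lborel)"
    unfolding H_def by measurable
  have inner_r: "(\<integral>\<^sup>+ r. H v r \<partial>lborel) = ennreal (v powr (- 1 - \<gamma>) * (1 - exp (- c * v))) * indicator {0<..} v"
    for v
  proof (cases "0 < v")
    case True
    have "(\<integral>\<^sup>+ r. ennreal (c * exp (- c * r)) * indicator {0..v} r \<partial>lborel) = ennreal (- exp (- c * v) - - exp (- c * 0))"
      using True c by (intro nn_integral_FTC_Icc) (auto intro!: derivative_eq_intros)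
    moreover have "(\<integral>\<^sup>+ r. H v r \<partial>lborel)
        = ennreal (v powr (- 1 - \<gamma>)) * (\<integral>\<^sup>+ r. ennreal (c * exp (- c * r)) * indicator {0..v} r \<partial>lborel)"
      using True c by (subst nn_integral_cmult[symmetric])
        (auto simp: H_def indicator_def ennreal_mult' intro!: nn_integral_cong)
    ultimately show ?thesis
      using True by (simp add: ennreal_mult')
  qed (simp add: H_def)
  have inner_v: "(\<integral>\<^sup>+ v. H v r \<partial>lborel) = ennreal (c / \<gamma> * (r powr (1 - \<gamma> - 1) * exp (- (r * c)))) * indicator {0<..} r"
    if "r \<noteq> 0" for r
  proof (cases "0 < r")
    case True
    have "(\<integral>\<^sup>+ v. H v r \<partial>lborel) = ennreal (c * exp (- c * r)) * (\<integral>\<^sup>+ v. ennreal (v powr (- 1 - \<gamma>)) * indicator {r..} v \<partial>lborel)"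
      using True c by (subst nn_integral_cmult[symmetric])
        (auto simp: H_def indicator_def ennreal_mult' mult_ac intro!: nn_integral_cong)
    also have "\<dots> = ennreal (c * exp (- c * r)) * ennreal (r powr (- \<gamma>) / \<gamma>)"
      by (simp only: nn_integral_powr_tail[OF True \<gamma>(1)])
    finally show ?thesis
      using True c \<gamma> by (simp add: field_simps flip: ennreal_mult')
  qed (use that in \<open>simp add: H_def\<close>)
  have "(\<integral>\<^sup>+ v. ennreal (v powr (- 1 - \<gamma>) * (1 - exp (- c * v))) * indicator {0<..} v \<partial>lborel)
      = (\<integral>\<^sup>+ r. (\<integral>\<^sup>+ v. H v r \<partial>lborel) \<partial>lborel)"
    by (simp add: inner_r lborel_pair.Fubini')
  also have "\<dots> = (\<integral>\<^sup>+ r. ennreal (c / \<gamma> * (r powr (1 - \<gamma> - 1) * exp (- (r * c)))) * indicator {0<..} r \<partial>lborel)"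
    by (intro nn_integral_cong_AE) (use AE_lborel_singleton[of 0] in \<open>auto elim!: eventually_mono simp: inner_v\<close>)
  also have "\<dots> = ennreal (c / \<gamma>) * (\<integral>\<^sup>+ r. ennreal (r powr (1 - \<gamma> - 1) * exp (- (r * c))) * indicator {0<..} r \<partial>lborel)"
    using c \<gamma> by (intro nn_integral_ennreal_cmult_indicator) auto
  also have "\<dots> = ennreal (c / \<gamma> * (Gamma (1 - \<gamma>) * c powr (- (1 - \<gamma>))))"
    using c \<gamma> by (subst nn_integral_Gamma_laplace) (simp_all flip: ennreal_mult')
  also have "c / \<gamma> * (Gamma (1 - \<gamma>) * c powr (- (1 - \<gamma>))) = - Gamma (- \<gamma>) * c powr \<gamma>"
    using c \<gamma> by (simp add: Gamma_one_minus powr_diff powr_minus field_simps)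
  finally show ?thesis .
qed

lemma nn_integral_powr_one_minus_exp_inverse:
  fixes \<gamma> c :: real assumes \<gamma>: "0 < \<gamma>" "\<gamma> < 1" and c: "0 \<le> c"
  shows "(\<integral>\<^sup>+ u. ennreal (u powr (\<gamma> - 1) * (1 - exp (- c / u))) * indicator {0<..} u \<partial>lborel)
       = ennreal (- Gamma (- \<gamma>) * c powr \<gamma>)"
proof (cases "c = 0")
  case False
  with c have c: "0 < c" by simp
  have "(\<integral>\<^sup>+ u. ennreal (u powr (\<gamma> - 1) * (1 - exp (- c / u))) * indicator {0<..} u \<partial>lborel)
      = (\<integral>\<^sup>+ v. ennreal ((1 / v) powr (\<gamma> - 1) * (1 - exp (- c / (1 / v)))) * ennreal (1 / v\<^sup>2) * indicator {0<..} v \<partial>lborel)"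
    by (rule nn_integral_pos_inverse_subst) simp
  also have "\<dots> = (\<integral>\<^sup>+ v. ennreal (v powr (- 1 - \<gamma>) * (1 - exp (- c * v))) * indicator {0<..} v \<partial>lborel)"
  proof (intro nn_integral_cong)
    fix v :: real
    have "0 < v \<Longrightarrow> (1 / v) powr (\<gamma> - 1) * (1 / v\<^sup>2) = v powr (- 1 - \<gamma>)"
      by (simp add: powr_divide powr_diff powr_minus power2_eq_square field_simps flip: powr_add)
    then show "ennreal ((1 / v) powr (\<gamma> - 1) * (1 - exp (- c / (1 / v)))) * ennreal (1 / v\<^sup>2) * indicator {0<..} v
        = ennreal (v powr (- 1 - \<gamma>) * (1 - exp (- c * v))) * indicator {0<..} v"
      using c by (cases "0 < v") (simp_all add: mult_ac flip: ennreal_mult')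
  qed
  also have "\<dots> = ennreal (- Gamma (- \<gamma>) * c powr \<gamma>)"
    by (rule nn_integral_powr_one_minus_exp[OF \<gamma> c])
  finally show ?thesis .
qed simp

lemma nn_integral_exp_neg_abs_powr_finite:
  fixes c \<alpha> :: real assumes c: "0 < c" and \<alpha>: "0 < \<alpha>"
  shows "(\<integral>\<^sup>+ y. ennreal (exp (- c * \<bar>y\<bar> powr \<alpha>)) \<partial>lborel) < \<infinity>"
proof -
  define \<phi> where "\<phi> y = ennreal (exp (- c * \<bar>y\<bar> powr \<alpha>))" for y :: real
  have [measurable]: "\<phi> \<in> borel_measurable borel" unfolding \<phi>_def by measurable
  have "(\<integral>\<^sup>+ y. \<phi> y * indicator {0<..} y \<partial>lborel)
      = (\<integral>\<^sup>+ u. \<phi> (u powr (1 / \<alpha>)) * ennreal (1 / \<alpha> * u powr (1 / \<alpha> - 1)) * indicator {0<..} u \<partial>lborel)"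
    using \<alpha> by (intro nn_integral_pos_powr_subst) auto
  also have "\<dots> = (\<integral>\<^sup>+ u. ennreal (1 / \<alpha>) * (ennreal (u powr (1 / \<alpha> - 1) * exp (- u * c)) * indicator {0<..} u) \<partial>lborel)"
    using \<alpha> by (intro nn_integral_cong)
      (auto simp: \<phi>_def powr_powr mult_ac split: split_indicator simp flip: ennreal_mult')
  also have "\<dots> = ennreal (1 / \<alpha>) * ennreal (Gamma (1 / \<alpha>) * c powr (- (1 / \<alpha>)))"
    using nn_integral_Gamma_laplace[OF c, of "1 / \<alpha>"] \<alpha> by (simp add: nn_integral_cmult)
  finally have half: "(\<integral>\<^sup>+ y. \<phi> y * indicator {0<..} y \<partial>lborel) < \<infinity>"
    by (simp add: ennreal_mult_less_top)
  have "(\<integral>\<^sup>+ y. \<phi> y \<partial>lborel) = (\<integral>\<^sup>+ y. \<phi> y * indicator {0<..} y + \<phi> (- y) * indicator {0<..} (- y) \<partial>lborel)"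
    by (intro nn_integral_cong_AE)
      (use AE_lborel_singleton[of 0] in \<open>auto elim!: eventually_mono simp: \<phi>_def indicator_def\<close>)
  also have "\<dots> = 2 * (\<integral>\<^sup>+ y. \<phi> y * indicator {0<..} y \<partial>lborel)"
    using nn_integral_real_affine[of "\<lambda>y. \<phi> y * indicator {0<..} y" "-1" 0]
    by (simp add: nn_integral_add mult_2)
  finally show ?thesis
    using half by (simp add: \<phi>_def ennreal_mult_less_top)
qed

section \<open>Gaussian integrals\<close>

lemma
  fixes u a :: real assumes u: "0 < u"
  shows integrable_gaussian_fourier_1d:
      "integrable lborel (\<lambda>y. exp (- \<i> * of_real (y * a)) * of_real (exp (- u * y\<^sup>2)))"
    and integral_gaussian_fourier_1d:
      "(\<integral>y. exp (- \<i> * of_real (y * a)) * of_real (exp (- u * y\<^sup>2)) \<partial>lborel)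
       = of_real (sqrt (pi / u) * exp (- a\<^sup>2 / (4 * u)))"
proof -
  define c where "c = sqrt (2 * u)"
  have c: "0 < c" "c\<^sup>2 = 2 * u" using u by (auto simp: c_def)
  define g where "g x = std_normal_density x *\<^sub>R iexp (- a / c * x)" for x
  have g_int: "integrable lborel g"
    unfolding g_def by (rule Bochner_Integration.integrable_bound[OF integrable_normal_density]) (auto simp: norm_mult)
  have "char std_normal_distribution (- a / c) = (\<integral>x. g x \<partial>lborel)"
    unfolding char_def g_def by (subst integral_density) auto
  then have g_char: "(\<integral>x. g x \<partial>lborel) = exp (- (a / c)\<^sup>2 / 2)"
    by (simp add: char_std_normal_distribution)
  have g_scaled: "exp (- \<i> * of_real (y * a)) * of_real (exp (- u * y\<^sup>2)) = of_real (sqrt (2 * pi)) * g (c * y)" for y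
  proof -
    have "- (c * y)\<^sup>2 / 2 = - u * y\<^sup>2" using c by (simp add: power_mult_distrib)
    then show ?thesis
      using c by (simp add: g_def std_normal_density_def scaleR_conv_of_real mult.commute)
  qed
  show "integrable lborel (\<lambda>y. exp (- \<i> * of_real (y * a)) * of_real (exp (- u * y\<^sup>2)))"
    unfolding g_scaled using lborel_integrable_real_affine[OF g_int, of c 0] c by simp
  have "(\<integral>x. g x \<partial>lborel) = c *\<^sub>R (\<integral>y. g (c * y) \<partial>lborel)"
    using lborel_integral_real_affine[of c g 0] c by simp
  moreover have "sqrt (2 * pi) / c = sqrt (pi / u)"
    by (simp add: c_def flip: real_sqrt_divide)
  moreover have "(a / c)\<^sup>2 / 2 = a\<^sup>2 / (4 * u)"
    using c by (simp add: power_divide)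
  ultimately show "(\<integral>y. exp (- \<i> * of_real (y * a)) * of_real (exp (- u * y\<^sup>2)) \<partial>lborel)
       = of_real (sqrt (pi / u) * exp (- a\<^sup>2 / (4 * u)))"
    unfolding g_scaled using c g_char by (simp add: scaleR_conv_of_real field_simps)
qed

lemma
  fixes f :: "'a::euclidean_space \<Rightarrow> real \<Rightarrow> 'b::{real_normed_field,banach,second_countable_topology}"
  assumes int: "\<And>b. b \<in> Basis \<Longrightarrow> integrable lborel (f b)"
  shows integrable_lborel_prod: "integrable lborel (\<lambda>x::'a. \<Prod>b\<in>Basis. f b (x \<bullet> b))"
    and integral_lborel_prod:
      "(\<integral>x. (\<Prod>b\<in>Basis. f b (x \<bullet> b)) \<partial>(lborel::'a measure)) = (\<Prod>b\<in>Basis. \<integral>y. f b y \<partial>lborel)"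
proof -
  interpret product_sigma_finite "\<lambda>_::'a. lborel :: real measure" by standard
  have [measurable]: "f b \<in> borel_measurable borel" if "b \<in> Basis" for b
    using int[OF that] by (simp add: borel_measurable_integrable)
  have [measurable]: "(\<lambda>g. \<Sum>b\<in>Basis. g b *\<^sub>R b) \<in> measurable (\<Pi>\<^sub>M b\<in>(Basis::'a set). lborel) borel"
    by measurable
  have [measurable]: "(\<lambda>x::'a. \<Prod>b\<in>Basis. f b (x \<bullet> b)) \<in> borel_measurable borel"
    by measurable
  have coord: "(\<Prod>b\<in>Basis. f b ((\<Sum>b'\<in>Basis. g b' *\<^sub>R b') \<bullet> b)) = (\<Prod>b\<in>Basis. f b (g b))" for g :: "'a \<Rightarrow> real"
    by (intro prod.cong refl) (simp add: inner_sum_left inner_Basis if_distrib cong: if_cong)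
  show "integrable lborel (\<lambda>x::'a. \<Prod>b\<in>Basis. f b (x \<bullet> b))"
    by (subst lborel_eq, subst integrable_distr_eq) (auto simp: coord intro!: product_integrable_prod int)
  show "(\<integral>x. (\<Prod>b\<in>Basis. f b (x \<bullet> b)) \<partial>(lborel::'a measure)) = (\<Prod>b\<in>Basis. \<integral>y. f b y \<partial>lborel)"
    by (subst lborel_eq, subst integral_distr) (auto simp: coord product_integral_prod int)
qed

lemma
  fixes x :: "'n::euclidean_space" and u :: real
  assumes u: "0 < u"
  shows integrable_gaussian_fourier:
      "integrable lborel (\<lambda>\<xi>::'n. exp (- \<i> * of_real (\<xi> \<bullet> x)) * of_real (exp (- u * (norm \<xi>)\<^sup>2)))"
    and integral_gaussian_fourier:
      "(\<integral>\<xi>. exp (- \<i> * of_real (\<xi> \<bullet> x)) * of_real (exp (- u * (norm \<xi>)\<^sup>2)) \<partial>(lborel::'n measure))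
       = of_real ((pi / u) powr (DIM('n) / 2) * exp (- (norm x)\<^sup>2 / (4 * u)))"
proof -
  define f where "f b y = exp (- \<i> * of_real (y * (x \<bullet> b))) * of_real (exp (- u * y\<^sup>2))" for b y
  have norm2: "(norm z)\<^sup>2 = (\<Sum>b\<in>Basis. (z \<bullet> b)\<^sup>2)" for z :: 'n
    unfolding power2_norm_eq_inner by (subst euclidean_inner) (simp add: power2_eq_square)
  have prod_f: "exp (- \<i> * of_real (\<xi> \<bullet> x)) * of_real (exp (- u * (norm \<xi>)\<^sup>2)) = (\<Prod>b\<in>Basis. f b (\<xi> \<bullet> b))"
    for \<xi> :: 'n
    by (simp add: f_def prod.distrib euclidean_inner[of \<xi> x] norm2 sum_distrib_left sum_negf
        flip: exp_sum of_real_prod)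
  have "integrable lborel (f b)" "(\<integral>y. f b y \<partial>lborel) = of_real (sqrt (pi / u) * exp (- (x \<bullet> b)\<^sup>2 / (4 * u)))"
    for b
    unfolding f_def using integrable_gaussian_fourier_1d[OF u] integral_gaussian_fourier_1d[OF u] by auto
  moreover have "sqrt (pi / u) ^ DIM('n) = (pi / u) powr (DIM('n) / 2)"
    using u by (simp add: powr_half_sqrt[symmetric] powr_realpow[symmetric] powr_powr)
  ultimately show
    "integrable lborel (\<lambda>\<xi>::'n. exp (- \<i> * of_real (\<xi> \<bullet> x)) * of_real (exp (- u * (norm \<xi>)\<^sup>2)))"
    "(\<integral>\<xi>. exp (- \<i> * of_real (\<xi> \<bullet> x)) * of_real (exp (- u * (norm \<xi>)\<^sup>2)) \<partial>(lborel::'n measure))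
       = of_real ((pi / u) powr (DIM('n) / 2) * exp (- (norm x)\<^sup>2 / (4 * u)))"
    unfolding prod_f
    by (auto simp: integrable_lborel_prod integral_lborel_prod prod.distrib norm2 sum_divide_distrib sum_negf
        simp flip: exp_sum of_real_prod of_real_power)
qed

lemma
  fixes y :: "'n::euclidean_space" and u :: real assumes u: "0 < u"
  shows integrable_gaussian_cos: "integrable lborel (\<lambda>\<xi>::'n. cos (\<xi> \<bullet> y) * exp (- u * (norm \<xi>)\<^sup>2))"
    and integral_gaussian_cos:
      "(\<integral>\<xi>. cos (\<xi> \<bullet> y) * exp (- u * (norm \<xi>)\<^sup>2) \<partial>(lborel::'n measure))
       = (pi / u) powr (DIM('n) / 2) * exp (- (norm y)\<^sup>2 / (4 * u))"
proof -
  have Re_eq: "(\<lambda>\<xi>::'n. cos (\<xi> \<bullet> y) * exp (- u * (norm \<xi>)\<^sup>2))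
      = (\<lambda>\<xi>. Re (exp (- \<i> * of_real (\<xi> \<bullet> y)) * of_real (exp (- u * (norm \<xi>)\<^sup>2))))"
    by (simp add: fun_eq_iff Re_exp Im_exp)
  show "integrable lborel (\<lambda>\<xi>::'n. cos (\<xi> \<bullet> y) * exp (- u * (norm \<xi>)\<^sup>2))"
    unfolding Re_eq by (rule integrable_Re[OF integrable_gaussian_fourier[OF u]])
  show "(\<integral>\<xi>. cos (\<xi> \<bullet> y) * exp (- u * (norm \<xi>)\<^sup>2) \<partial>(lborel::'n measure))
       = (pi / u) powr (DIM('n) / 2) * exp (- (norm y)\<^sup>2 / (4 * u))"
    unfolding Re_eq integral_Re[OF integrable_gaussian_fourier[OF u]] integral_gaussian_fourier[OF u] by simp
qed

lemma
  fixes x :: "'n::euclidean_space" and u :: real assumes u: "0 < u"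
  shows integrable_gaussian_one_minus_cos:
      "integrable lborel (\<lambda>\<xi>::'n. (1 - cos (\<xi> \<bullet> x)) * exp (- u * (norm \<xi>)\<^sup>2))"
    and integral_gaussian_one_minus_cos:
      "(\<integral>\<xi>. (1 - cos (\<xi> \<bullet> x)) * exp (- u * (norm \<xi>)\<^sup>2) \<partial>(lborel::'n measure))
       = (pi / u) powr (DIM('n) / 2) * (1 - exp (- (norm x)\<^sup>2 / (4 * u)))"
proof -
  note I0 = integrable_gaussian_cos[OF u, of "0::'n"] and Ix = integrable_gaussian_cos[OF u, of x]
  have diff: "(\<lambda>\<xi>::'n. (1 - cos (\<xi> \<bullet> x)) * exp (- u * (norm \<xi>)\<^sup>2))
      = (\<lambda>\<xi>. cos (\<xi> \<bullet> 0) * exp (- u * (norm \<xi>)\<^sup>2) - cos (\<xi> \<bullet> x) * exp (- u * (norm \<xi>)\<^sup>2))"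
    by (simp add: fun_eq_iff algebra_simps)
  show "integrable lborel (\<lambda>\<xi>::'n. (1 - cos (\<xi> \<bullet> x)) * exp (- u * (norm \<xi>)\<^sup>2))"
    unfolding diff using I0 Ix by (rule Bochner_Integration.integrable_diff)
  show "(\<integral>\<xi>. (1 - cos (\<xi> \<bullet> x)) * exp (- u * (norm \<xi>)\<^sup>2) \<partial>(lborel::'n measure))
       = (pi / u) powr (DIM('n) / 2) * (1 - exp (- (norm x)\<^sup>2 / (4 * u)))"
    unfolding diff Bochner_Integration.integral_diff[OF I0 Ix] integral_gaussian_cos[OF u]
    by (simp add: algebra_simps)
qed

lemma nn_integral_gaussian_one_minus_cos:
  fixes x :: "'n::euclidean_space" and u :: real assumes u: "0 < u"
  shows "(\<integral>\<^sup>+ \<xi>. ennreal ((1 - cos (\<xi> \<bullet> x)) * exp (- u * (norm \<xi>)\<^sup>2)) \<partial>(lborel::'n measure))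
       = ennreal ((pi / u) powr (DIM('n) / 2) * (1 - exp (- (norm x)\<^sup>2 / (4 * u))))"
  using integrable_gaussian_one_minus_cos[OF u, of x] integral_gaussian_one_minus_cos[OF u, of x]
  by (subst nn_integral_eq_integral) auto

section \<open>The Riesz kernel\<close>

lemma nn_integral_one_minus_cos_norm_powr_subordination:
  fixes x :: "'n::euclidean_space" and h :: real
  assumes h: "0 < h"
  shows "(\<integral>\<^sup>+ \<xi>. ennreal ((1 - cos (\<xi> \<bullet> x)) * norm \<xi> powr (- (2 * h))) \<partial>lborel)
       = ennreal (pi powr (DIM('n) / 2) / Gamma h) * (\<integral>\<^sup>+ u. ennreal (u powr (h - DIM('n) / 2 - 1)
           * (1 - exp (- ((norm x)\<^sup>2 / 4) / u))) * indicator {0<..} u \<partial>lborel)"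
proof -
  define d where "d = real DIM('n)"
  have G: "0 < Gamma h" using h by (rule Gamma_real_pos)
  \<comment> \<open>Its \<open>u\<close>-integral is the integrand on the left (Gaussian mixture for \<open>norm \<xi> powr (- (2 * h))\<close>),
    its \<open>\<xi>\<close>-integral a Gaussian Fourier integral.\<close>
  define K where "K \<xi> u = ennreal (1 / Gamma h * (1 - cos (\<xi> \<bullet> x)) * (u powr (h - 1) * exp (- u * (norm \<xi>)\<^sup>2)))
    * indicator {0<..} u" for \<xi> :: 'n and u :: real
  have [measurable]: "case_prod K \<in> borel_measurable (lborel \<Otimes>\<^sub>M lborel)"
    unfolding K_def by measurable
  have inner_u: "(\<integral>\<^sup>+ u. K \<xi> u \<partial>lborel) = ennreal ((1 - cos (\<xi> \<bullet> x)) * norm \<xi> powr (- (2 * h)))" for \<xi>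
  proof (cases "\<xi> = 0")
    case False
    have "(\<integral>\<^sup>+ u. K \<xi> u \<partial>lborel) = ennreal (1 / Gamma h * (1 - cos (\<xi> \<bullet> x)))
        * (\<integral>\<^sup>+ u. ennreal (u powr (h - 1) * exp (- (u * norm \<xi> powr 2))) * indicator {0<..} u \<partial>lborel)"
      unfolding K_def using G by (subst nn_integral_ennreal_cmult_indicator[symmetric]) (auto simp: mult.assoc)
    then show ?thesis
      using nn_integral_laplace_norm_powr[OF False, of 2 h] h G by (simp add: less_imp_neq[OF G, symmetric] flip: ennreal_mult')
  qed (simp add: K_def)
  have inner_\<xi>: "(\<integral>\<^sup>+ \<xi>. K \<xi> u \<partial>lborel)
      = ennreal (pi powr (d / 2) / Gamma h * (u powr (h - d / 2 - 1) * (1 - exp (- ((norm x)\<^sup>2 / 4) / u))))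
        * indicator {0<..} u" for u
  proof (cases "0 < u")
    case True
    have c: "0 \<le> 1 / Gamma h * u powr (h - 1)" using G by simp
    have "(\<integral>\<^sup>+ \<xi>. K \<xi> u \<partial>lborel) = (\<integral>\<^sup>+ \<xi>. ennreal (1 / Gamma h * u powr (h - 1))
        * ennreal ((1 - cos (\<xi> \<bullet> x)) * exp (- u * (norm \<xi>)\<^sup>2)) \<partial>(lborel::'n measure))"
      using True G by (intro nn_integral_cong) (simp add: K_def mult_ac flip: ennreal_mult')
    also have "\<dots> = ennreal (1 / Gamma h * u powr (h - 1) * ((pi / u) powr (d / 2) * (1 - exp (- (norm x)\<^sup>2 / (4 * u)))))"
      using nn_integral_gaussian_one_minus_cos[OF True, of x] c
      by (subst nn_integral_cmult) (simp_all add: d_def flip: ennreal_mult')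
    also have "1 / Gamma h * u powr (h - 1) * ((pi / u) powr (d / 2) * (1 - exp (- (norm x)\<^sup>2 / (4 * u))))
        = u powr (h - 1) * (pi / u) powr (d / 2) / Gamma h * (1 - exp (- ((norm x)\<^sup>2 / 4) / u))"
      by simp
    also have "u powr (h - 1) * (pi / u) powr (d / 2) = pi powr (d / 2) * (u powr (h - 1) / u powr (d / 2))"
      using True by (simp add: powr_divide)
    also have "u powr (h - 1) / u powr (d / 2) = u powr (h - d / 2 - 1)"
      by (simp add: diff_diff_eq add.commute flip: powr_diff)
    finally show ?thesis
      using True by (simp add: mult_ac)
  qed (simp add: K_def)
  have "(\<integral>\<^sup>+ \<xi>. ennreal ((1 - cos (\<xi> \<bullet> x)) * norm \<xi> powr (- (2 * h))) \<partial>lborel)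
      = (\<integral>\<^sup>+ u. (\<integral>\<^sup>+ \<xi>. K \<xi> u \<partial>lborel) \<partial>lborel)"
    by (simp add: inner_u lborel_pair.Fubini')
  also have "\<dots> = ennreal (pi powr (d / 2) / Gamma h)
      * (\<integral>\<^sup>+ u. ennreal (u powr (h - d / 2 - 1) * (1 - exp (- ((norm x)\<^sup>2 / 4) / u))) * indicator {0<..} u \<partial>lborel)"
    using G by (simp only: inner_\<xi>, subst nn_integral_ennreal_cmult_indicator) auto
  finally show ?thesis
    by (simp add: d_def)
qed

lemma nn_integral_one_minus_cos_mult_norm_powr:
  fixes x :: "'n::euclidean_space" and \<beta> :: real
  assumes \<beta>: "0 < \<beta>" "\<beta> < 2"
  shows "(\<integral>\<^sup>+ \<xi>. ennreal ((1 - cos (\<xi> \<bullet> x)) * norm \<xi> powr (- (DIM('n) + \<beta>))) \<partial>lborel)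
       = ennreal (pi powr (DIM('n) / 2) * - Gamma (- \<beta> / 2) / (2 powr \<beta> * Gamma ((DIM('n) + \<beta>) / 2))
                  * norm x powr \<beta>)"
proof -
  define h where "h = (DIM('n) + \<beta>) / 2"
  have h: "0 < h" and "- (DIM('n) + \<beta>) = - (2 * h)" and "h - DIM('n) / 2 - 1 = \<beta> / 2 - 1"
    using \<beta> by (auto simp: h_def field_simps)
  have \<gamma>: "0 < \<beta> / 2" "\<beta> / 2 < 1" using \<beta> by auto
  have G: "0 < Gamma h" using h by (rule Gamma_real_pos)
  have "(\<integral>\<^sup>+ \<xi>. ennreal ((1 - cos (\<xi> \<bullet> x)) * norm \<xi> powr (- (DIM('n) + \<beta>))) \<partial>lborel)
      = ennreal (pi powr (DIM('n) / 2) / Gamma h) * ennreal (- Gamma (- (\<beta> / 2)) * ((norm x)\<^sup>2 / 4) powr (\<beta> / 2))"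
    unfolding \<open>- (DIM('n) + \<beta>) = - (2 * h)\<close> nn_integral_one_minus_cos_norm_powr_subordination[OF h]
      \<open>h - DIM('n) / 2 - 1 = \<beta> / 2 - 1\<close>
    by (subst nn_integral_powr_one_minus_exp_inverse[OF \<gamma>]) simp_all
  also have "((norm x)\<^sup>2 / 4) powr (\<beta> / 2) = norm x powr \<beta> / 2 powr \<beta>"
    by (simp add: powr_divide powr_powr flip: powr_numeral)
  also have "ennreal (pi powr (DIM('n) / 2) / Gamma h) * ennreal (- Gamma (- (\<beta> / 2)) * (norm x powr \<beta> / 2 powr \<beta>))
      = ennreal (pi powr (DIM('n) / 2) * - Gamma (- \<beta> / 2) / (2 powr \<beta> * Gamma h) * norm x powr \<beta>)"
    using G by (subst ennreal_mult'[symmetric]) (simp_all add: field_simps)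
  finally show ?thesis
    by (simp add: h_def)
qed

section \<open>The stable density\<close>

lemma integrable_exp_neg_norm_powr:
  fixes t \<alpha> :: real assumes t: "0 < t" and \<alpha>: "0 < \<alpha>"
  shows "integrable lborel (\<lambda>\<xi>::'n::euclidean_space. exp (- t * norm \<xi> powr \<alpha>))"
proof -
  define c where "c = t / DIM('n)"
  have c: "0 < c" using t by (simp add: c_def)
  \<comment> \<open>Since \<open>|\<xi> \<bullet> b| \<le> norm \<xi>\<close>, the kernel is dominated by a product of one-dimensional ones.\<close>
  let ?B = "\<lambda>\<xi>::'n. \<Prod>b\<in>Basis. exp (- c * \<bar>\<xi> \<bullet> b\<bar> powr \<alpha>)"
  have "(\<integral>\<^sup>+ \<xi>. ennreal (?B \<xi>) \<partial>lborel)
      = (\<integral>\<^sup>+ \<xi>. (\<Prod>b\<in>Basis. ennreal (exp (- c * \<bar>\<xi> \<bullet> b\<bar> powr \<alpha>))) \<partial>(lborel::'n measure))"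
    by (simp add: prod_ennreal)
  also have "\<dots> = (\<Prod>b\<in>(Basis::'n set). \<integral>\<^sup>+ y. ennreal (exp (- c * \<bar>y\<bar> powr \<alpha>)) \<partial>lborel)"
    by (rule nn_integral_lborel_prod) auto
  also have "\<dots> < \<infinity>"
    using nn_integral_exp_neg_abs_powr_finite[OF c \<alpha>] by (simp add: power_less_top_ennreal)
  finally have B_int: "integrable lborel ?B"
    by (intro integrableI_bounded) (auto simp: abs_prod prod_nonneg)
  have bound: "exp (- t * norm \<xi> powr \<alpha>) \<le> ?B \<xi>" for \<xi> :: 'n
  proof -
    have "(\<Sum>b\<in>(Basis::'n set). c * \<bar>\<xi> \<bullet> b\<bar> powr \<alpha>) \<le> (\<Sum>b\<in>(Basis::'n set). c * norm \<xi> powr \<alpha>)"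
      using c \<alpha> by (intro sum_mono mult_left_mono powr_mono2 Basis_le_norm) auto
    then show ?thesis
      by (simp add: c_def sum_negf flip: exp_sum)
  qed
  show ?thesis
    using bound by (intro Bochner_Integration.integrable_bound[OF B_int]) (auto simp: abs_prod prod_nonneg)
qed

lemma borel_measurable_stable_density [measurable]:
  "(\<lambda>t. stable_density \<alpha> t x) \<in> borel_measurable borel"
  unfolding stable_density_def by measurable

lemma stable_density_eq_cos_integral:
  fixes y :: "'n::euclidean_space" assumes "0 < t" and "0 < \<alpha>"
  shows "stable_density \<alpha> t y
       = (2 * pi) powr (- DIM('n)) * (\<integral>\<xi>. cos (\<xi> \<bullet> y) * exp (- t * norm \<xi> powr \<alpha>) \<partial>(lborel::'n measure))"
proof -
  have int: "integrable lborel (\<lambda>\<xi>::'n. exp (- \<i> * of_real (\<xi> \<bullet> y)) * of_real (exp (- t * norm \<xi> powr \<alpha>)))"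
    by (intro Bochner_Integration.integrable_bound[OF integrable_exp_neg_norm_powr[OF assms]])
      (auto simp: norm_mult)
  have "Re (\<integral>\<xi>. exp (- \<i> * of_real (\<xi> \<bullet> y)) * of_real (exp (- t * norm \<xi> powr \<alpha>)) \<partial>(lborel::'n measure))
      = (\<integral>\<xi>. cos (\<xi> \<bullet> y) * exp (- t * norm \<xi> powr \<alpha>) \<partial>lborel)"
    unfolding integral_Re[OF int, symmetric] by (simp add: Re_exp Im_exp)
  then show ?thesis
    by (simp add: stable_density_def)
qed

lemma
  fixes x :: "'n::euclidean_space" assumes "0 < t" and "0 < \<alpha>"
  shows integrable_one_minus_cos_exp_neg_norm_powr:
      "integrable lborel (\<lambda>\<xi>::'n. (1 - cos (\<xi> \<bullet> x)) * exp (- t * norm \<xi> powr \<alpha>))"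
    and stable_density_diff_eq:
      "stable_density \<alpha> t (0::'n) - stable_density \<alpha> t x
       = (2 * pi) powr (- DIM('n)) * (\<integral>\<xi>. (1 - cos (\<xi> \<bullet> x)) * exp (- t * norm \<xi> powr \<alpha>) \<partial>(lborel::'n measure))"
proof -
  note I1 = integrable_exp_neg_norm_powr[OF assms, where 'n='n]
  have I2: "integrable lborel (\<lambda>\<xi>::'n. cos (\<xi> \<bullet> x) * exp (- t * norm \<xi> powr \<alpha>))"
    by (intro Bochner_Integration.integrable_bound[OF I1]) (auto simp: abs_mult mult_left_le_one_le)
  have diff: "(\<lambda>\<xi>::'n. (1 - cos (\<xi> \<bullet> x)) * exp (- t * norm \<xi> powr \<alpha>))
      = (\<lambda>\<xi>. exp (- t * norm \<xi> powr \<alpha>) - cos (\<xi> \<bullet> x) * exp (- t * norm \<xi> powr \<alpha>))"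
    by (simp add: fun_eq_iff algebra_simps)
  show "integrable lborel (\<lambda>\<xi>::'n. (1 - cos (\<xi> \<bullet> x)) * exp (- t * norm \<xi> powr \<alpha>))"
    unfolding diff using I1 I2 by (rule Bochner_Integration.integrable_diff)
  show "stable_density \<alpha> t (0::'n) - stable_density \<alpha> t x
       = (2 * pi) powr (- DIM('n)) * (\<integral>\<xi>. (1 - cos (\<xi> \<bullet> x)) * exp (- t * norm \<xi> powr \<alpha>) \<partial>(lborel::'n measure))"
    unfolding diff stable_density_eq_cos_integral[OF assms] Bochner_Integration.integral_diff[OF I1 I2]
    by (simp add: algebra_simps)
qed

lemma nn_integral_stable_density_diff_mellin:
  fixes x :: "'n::euclidean_space" and \<alpha> s :: real
  assumes \<alpha>: "0 < \<alpha>" and s: "0 < s"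
  shows "(\<integral>\<^sup>+ t. ennreal ((stable_density \<alpha> t (0::'n) - stable_density \<alpha> t x) * t powr (s - 1))
             * indicator {0<..} t \<partial>lborel)
       = ennreal ((2 * pi) powr (- DIM('n)) * Gamma s)
         * (\<integral>\<^sup>+ \<xi>. ennreal ((1 - cos (\<xi> \<bullet> x)) * norm \<xi> powr (- (\<alpha> * s))) \<partial>lborel)"
proof -
  define C where "C = (2 * pi) powr (- DIM('n))"
  have C: "0 < C" by (simp add: C_def)
  define G where "G \<xi> t = ennreal (C * (1 - cos (\<xi> \<bullet> x)) * (t powr (s - 1) * exp (- (t * norm \<xi> powr \<alpha>))))
    * indicator {0<..} t" for \<xi> :: 'n and t
  have [measurable]: "case_prod G \<in> borel_measurable (lborel \<Otimes>\<^sub>M lborel)"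
    unfolding G_def by measurable
  have inner_\<xi>: "(\<integral>\<^sup>+ \<xi>. G \<xi> t \<partial>lborel)
      = ennreal ((stable_density \<alpha> t (0::'n) - stable_density \<alpha> t x) * t powr (s - 1)) * indicator {0<..} t" for t
  proof (cases "0 < t")
    case True
    have "(\<integral>\<^sup>+ \<xi>. G \<xi> t \<partial>lborel)
        = (\<integral>\<^sup>+ \<xi>. ennreal (C * t powr (s - 1) * ((1 - cos (\<xi> \<bullet> x)) * exp (- t * norm \<xi> powr \<alpha>))) \<partial>lborel)"
      using True by (intro nn_integral_cong) (simp add: G_def mult_ac)
    also have "\<dots> = ennreal (\<integral>\<xi>. C * t powr (s - 1) * ((1 - cos (\<xi> \<bullet> x)) * exp (- t * norm \<xi> powr \<alpha>)) \<partial>lborel)"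
      using integrable_one_minus_cos_exp_neg_norm_powr[OF True \<alpha>, of x] C
      by (intro nn_integral_eq_integral) auto
    also have "\<dots> = ennreal (C * t powr (s - 1) * (\<integral>\<xi>. (1 - cos (\<xi> \<bullet> x)) * exp (- t * norm \<xi> powr \<alpha>) \<partial>lborel))"
      by (simp only: integral_mult_right_zero)
    also have "\<dots> = ennreal ((stable_density \<alpha> t (0::'n) - stable_density \<alpha> t x) * t powr (s - 1))"
      by (simp only: stable_density_diff_eq[OF True \<alpha>] C_def mult_ac)
    finally show ?thesis
      using True by simp
  qed (simp add: G_def)
  have inner_t: "(\<integral>\<^sup>+ t. G \<xi> t \<partial>lborel)
      = ennreal (C * Gamma s) * ennreal ((1 - cos (\<xi> \<bullet> x)) * norm \<xi> powr (- (\<alpha> * s)))" for \<xi>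
  proof (cases "\<xi> = 0")
    case False
    have "(\<integral>\<^sup>+ t. G \<xi> t \<partial>lborel) = ennreal (C * (1 - cos (\<xi> \<bullet> x)))
        * (\<integral>\<^sup>+ t. ennreal (t powr (s - 1) * exp (- (t * norm \<xi> powr \<alpha>))) * indicator {0<..} t \<partial>lborel)"
      unfolding G_def using C by (intro nn_integral_ennreal_cmult_indicator) auto
    also have "\<dots> = ennreal (C * (1 - cos (\<xi> \<bullet> x))) * ennreal (Gamma s * norm \<xi> powr (- (\<alpha> * s)))"
      by (simp only: nn_integral_laplace_norm_powr[OF False \<alpha> s])
    finally show ?thesis
      using C s by (simp add: mult_ac flip: ennreal_mult')
  qed (simp add: G_def)
  have "(\<integral>\<^sup>+ t. ennreal ((stable_density \<alpha> t (0::'n) - stable_density \<alpha> t x) * t powr (s - 1))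
          * indicator {0<..} t \<partial>lborel) = (\<integral>\<^sup>+ t. (\<integral>\<^sup>+ \<xi>. G \<xi> t \<partial>lborel) \<partial>lborel)"
    by (simp add: inner_\<xi>)
  also have "\<dots> = (\<integral>\<^sup>+ \<xi>. (\<integral>\<^sup>+ t. G \<xi> t \<partial>lborel) \<partial>lborel)"
    by (rule lborel_pair.Fubini') simp
  also have "\<dots> = ennreal (C * Gamma s) * (\<integral>\<^sup>+ \<xi>. ennreal ((1 - cos (\<xi> \<bullet> x)) * norm \<xi> powr (- (\<alpha> * s))) \<partial>lborel)"
    by (simp add: inner_t nn_integral_cmult)
  finally show ?thesis
    by (simp add: C_def)
qed

lemma stable_density_le_origin:
  fixes x :: "'n::euclidean_space" assumes "0 < t" and "0 < \<alpha>"
  shows "stable_density \<alpha> t x \<le> stable_density \<alpha> t (0::'n)"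
proof -
  have "0 \<le> (2 * pi) powr (- DIM('n))
      * (\<integral>\<xi>. (1 - cos (\<xi> \<bullet> x)) * exp (- t * norm \<xi> powr \<alpha>) \<partial>(lborel::'n measure))"
    by (intro mult_nonneg_nonneg Bochner_Integration.integral_nonneg) simp_all
  then show ?thesis
    using stable_density_diff_eq[OF assms, of x] by linarith
qed

lemma nn_integral_stable_density_diff_powr:
  fixes x :: "'n::euclidean_space" and \<alpha> \<beta> :: real
  assumes \<alpha>: "0 < \<alpha>" and \<beta>: "0 < \<beta>" "\<beta> < 2"
  shows "(\<integral>\<^sup>+ t. ennreal ((stable_density \<alpha> t (0::'n) - stable_density \<alpha> t x) * t powr ((DIM('n) + \<beta>) / \<alpha> - 1))
             * indicator {0<..} t \<partial>lborel)
       = ennreal ((2 * pi) powr (- DIM('n)) * Gamma ((DIM('n) + \<beta>) / \<alpha>)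
           * (pi powr (DIM('n) / 2) * - Gamma (- \<beta> / 2) / (2 powr \<beta> * Gamma ((DIM('n) + \<beta>) / 2)) * norm x powr \<beta>))"
proof -
  have s: "0 < (DIM('n) + \<beta>) / \<alpha>" and "\<alpha> * ((DIM('n) + \<beta>) / \<alpha>) = DIM('n) + \<beta>"
    using \<alpha> \<beta> by auto
  then show ?thesis
    using nn_integral_stable_density_diff_mellin[OF \<alpha> s, of x] nn_integral_one_minus_cos_mult_norm_powr[OF \<beta>, of x]
      Gamma_real_pos[OF s] by (simp flip: ennreal_mult')
qed

theorem lemma2p2:
  fixes x :: "'n::euclidean_space" and \<alpha> \<beta> :: real
  assumes "0 < \<alpha>" and "\<alpha> < min (real DIM('n)) 2"
    and "0 < \<beta>" and "\<beta> < 2"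
  defines "d \<equiv> real DIM('n)"
  shows "set_integrable lborel {0<..}
           (\<lambda>t. (stable_density \<alpha> t (0::'n) - stable_density \<alpha> t x)
                 * t powr ((d - \<alpha> + \<beta>) / \<alpha>))
       \<and> norm x powr \<beta> =
           2 powr (d + \<beta>) * pi powr (d / 2)
           * Gamma ((d + \<beta>) / 2) / (Gamma ((d + \<beta>) / \<alpha>) * \<bar>Gamma (- \<beta> / 2)\<bar>)
           * (LINT t:{0<..}|lborel. (stable_density \<alpha> t (0::'n) - stable_density \<alpha> t x)
                 * t powr ((d - \<alpha> + \<beta>) / \<alpha>))"
proof -
  define s where "s = (d + \<beta>) / \<alpha>"
  define F where "F = (\<lambda>t. (stable_density \<alpha> t (0::'n) - stable_density \<alpha> t x) * t powr (s - 1))"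
  define V where "V = (2 * pi) powr (- d) * Gamma s
    * (pi powr (d / 2) * - Gamma (- \<beta> / 2) / (2 powr \<beta> * Gamma ((d + \<beta>) / 2)) * norm x powr \<beta>)"
  have exponent: "(d - \<alpha> + \<beta>) / \<alpha> = s - 1"
    using assms by (simp add: s_def field_simps)
  have Gamma_signs: "0 < Gamma s" "0 < Gamma ((d + \<beta>) / 2)" "Gamma (- \<beta> / 2) < 0"
    using assms Gamma_neg_less_zero[of "\<beta> / 2"] by (auto simp: s_def d_def)
  then have "0 \<le> V"
    unfolding V_def by (intro mult_nonneg_nonneg divide_nonneg_pos) auto
  moreover have "0 \<le> F t" if "0 < t" for t
    using stable_density_le_origin[OF that \<open>0 < \<alpha>\<close>, of x] by (simp add: F_def)
  moreover have "(\<integral>\<^sup>+ t. ennreal (F t) * indicator {0<..} t \<partial>lborel) = ennreal V"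
    using nn_integral_stable_density_diff_powr[OF \<open>0 < \<alpha>\<close> \<open>0 < \<beta>\<close> \<open>\<beta> < 2\<close>, of x]
    by (simp add: F_def V_def s_def d_def)
  moreover have [measurable]: "F \<in> borel_measurable borel"
    unfolding F_def by measurable
  ultimately have "set_integrable lborel {0<..} F" "(LINT t:{0<..}|lborel. F t) = V"
    by (auto intro: set_integrable_nn_integral_eq set_integral_nn_integral_eq)
  moreover have "norm x powr \<beta> = 2 powr (d + \<beta>) * pi powr (d / 2) * Gamma ((d + \<beta>) / 2)
      / (Gamma s * \<bar>Gamma (- \<beta> / 2)\<bar>) * V"
    using Gamma_signs by (simp add: V_def powr_minus powr_mult field_simps flip: powr_add)
  ultimately show ?thesis
    by (simp add: F_def s_def exponent)
qed

end
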